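(* Under Assumption 1, $\lim_{\nu\to\infty}T^\nu=\frac1N\mathbf{1}_N\mathbf{1}_N^\top$, $\lim_{\nu\to\infty}A_\nu=A_\infty$, and $\lim_{\nu\to\infty}F_\nu(x)=F_\infty(x)$ uniformly in $x\in\mathcal{X}$. Moreover the operators $F_\nu$ are bounded on $\mathcal{X}$, uniformly in $\nu$.
   Context: Let $N,n,m$ be positive integers; for $i\in\{1,\dots,N\}$, $\mathcal{X}^i\subset\mathbb{R}^n$ is convex, compact with non-empty interior; $\mathcal{X}=\mathcal{X}^1\times\dots\times\mathcal{X}^N$, $x=[x^1;\dots;x^N]$. Costs $J^i(z_1,z_2):\mathcal{X}^i\times\mathrm{conv}(\mathcal{X}^1,\dots,\mathcal{X}^N)\to\mathbb{R}$ are continuously differentiable in $(z_1,z_2)$, with $x^i\mapsto J^i(x^i,\frac1N\sum_jx^j)$ convex for each fixed $x^{-i}$. $\hat A\in\mathbb{R}^{m\times n}$. $T\in[0,1]^{N\times N}$. Define $\sigma_\infty(x)=\frac1N\sum_jx^j$, $\sigma^i_\nu(x)=\sum_j[T^\nu]_{ij}x^j$, $A_\nu=T^\nu\otimes\hat A$, $A_\infty=\frac1N\mathbf{1}_N\mathbf{1}_N^\top\otimes\hat A$, $F_\infty(x)=[\nabla_{z_1}J^i(x^i,\sigma_\infty(x))+\frac1N\nabla_{z_2}J^i(x^i,\sigma_\infty(x))]_{i=1}^N$, $F_\nu(x)=[\nabla_{z_1}J^i(x^i,\sigma^i_\nu(x))+[T^\nu]_{ii}\nabla_{z_2}J^i(x^i,\sigma^i_\nu(x))]_{i=1}^N$.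 Assumption 1: $T$ is primitive (some power has all entries positive) and doubly stochastic. *)

theory Defs
  imports "HOL-Analysis.Analysis"
begin

primrec matpow :: "real^'n^'n \<Rightarrow> nat \<Rightarrow> real^'n^'n" where
  "matpow A 0 = mat 1"
| "matpow A (Suc k) = A ** matpow A k"

definition kron :: "real^'N^'N \<Rightarrow> real^'n^'m \<Rightarrow> real^('N \<times> 'n)^('N \<times> 'm)" where
  "kron M B = (\<chi> r. \<chi> c. M $ fst r $ fst c * B $ snd r $ snd c)"

definition avg_mat :: "real^'N::finite^'N" where
  "avg_mat = (\<chi> i j. 1 / real CARD('N))"

definition primitive :: "real^'N^'N \<Rightarrow> bool" where
  "primitive T \<longleftrightarrow> (\<exists>k. \<forall>i j. matpow T k $ i $ j > 0)"

definition doubly_stochastic :: "real^'N^'N \<Rightarrow> bool" where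
  "doubly_stochastic T \<longleftrightarrow> (\<forall>i j. T $ i $ j \<ge> 0)
     \<and> (\<forall>i. (\<Sum>j\<in>UNIV. T $ i $ j) = 1) \<and> (\<forall>j. (\<Sum>i\<in>UNIV. T $ i $ j) = 1)"

definition A_nu :: "real^'N^'N \<Rightarrow> real^'n^'m \<Rightarrow> nat \<Rightarrow> real^('N \<times> 'n)^('N \<times> 'm)" where
  "A_nu T Ahat \<nu> = kron (matpow T \<nu>) Ahat"

definition A_inf :: "real^'n^'m \<Rightarrow> real^('N::finite \<times> 'n)^('N \<times> 'm)" where
  "A_inf Ahat = kron (avg_mat :: real^'N^'N) Ahat"

text \<open>Stacked decision vector x = [x^1;...;x^N] is represented as x :: real^'n^'N, with x $ j = x^j.\<close>
definition sigma_inf :: "real^'n^'N::finite \<Rightarrow> real^'n" where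
  "sigma_inf x = (1 / real CARD('N)) *\<^sub>R (\<Sum>j\<in>UNIV. x $ j)"

definition sigma_nu :: "real^'N::finite^'N \<Rightarrow> nat \<Rightarrow> real^'n^'N \<Rightarrow> 'N \<Rightarrow> real^'n" where
  "sigma_nu T \<nu> x i = (\<Sum>j\<in>UNIV. matpow T \<nu> $ i $ j *\<^sub>R x $ j)"

text \<open>g1 i z1 z2 and g2 i z1 z2 are the partial gradients of J^i w.r.t. z1 and z2.\<close>
definition F_inf :: "('N::finite \<Rightarrow> real^'n \<Rightarrow> real^'n \<Rightarrow> real^'n) \<Rightarrow> ('N \<Rightarrow> real^'n \<Rightarrow> real^'n \<Rightarrow> real^'n)
    \<Rightarrow> real^'n^'N \<Rightarrow> real^'n^'N" where
  "F_inf g1 g2 x = (\<chi> i. g1 i (x $ i) (sigma_inf x) + (1 / real CARD('N)) *\<^sub>R g2 i (x $ i) (sigma_inf x))"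

definition F_nu :: "('N::finite \<Rightarrow> real^'n \<Rightarrow> real^'n \<Rightarrow> real^'n) \<Rightarrow> ('N \<Rightarrow> real^'n \<Rightarrow> real^'n \<Rightarrow> real^'n)
    \<Rightarrow> real^'N^'N \<Rightarrow> nat \<Rightarrow> real^'n^'N \<Rightarrow> real^'n^'N" where
  "F_nu g1 g2 T \<nu> x = (\<chi> i. g1 i (x $ i) (sigma_nu T \<nu> x i)
      + (matpow T \<nu> $ i $ i) *\<^sub>R g2 i (x $ i) (sigma_nu T \<nu> x i))"

end

theory Submission
  imports Defs
begin

text \<open>Multiplying by a row-stochastic matrix never increases the oscillation (maximum minus
  minimum) of a column, and multiplying by a row-stochastic matrix all of whose entries are at
  least \<open>\<delta>\<close> shrinks it by the factor \<open>1 - 2\<delta>\<close>. For primitive \<open>T\<close> some power \<open>T\<^sup>K\<close>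
  is such a matrix, so the column oscillations of \<open>T\<^sup>\<nu>\<close> decay geometrically; as the columns of
  the doubly stochastic \<open>T\<^sup>\<nu>\<close> sum to 1, every entry is within that oscillation of \<open>1/N\<close>.
  The aggregates \<open>\<sigma>\<^sup>i\<^sub>\<nu>\<close> are convex combinations of the \<open>x\<^sup>j\<close>, so they stay in the
  compact convex hull of the \<open>X\<^sup>j\<close>, where the gradients are uniformly continuous and
  bounded; this turns the convergence of the coefficients into uniform convergence and uniform
  boundedness of \<open>F\<^sub>\<nu>\<close>.\<close>

definition row_stochastic :: "real^'c^'r \<Rightarrow> bool" where
  "row_stochastic A \<longleftrightarrow> (\<forall>i j. 0 \<le> A $ i $ j) \<and> (\<forall>i. (\<Sum>j\<in>UNIV. A $ i $ j) = 1)"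

definition column_stochastic :: "real^'c^'r \<Rightarrow> bool" where
  "column_stochastic A \<longleftrightarrow> (\<forall>j. (\<Sum>i\<in>UNIV. A $ i $ j) = 1)"

lemma doubly_stochastic_iff:
  "doubly_stochastic T \<longleftrightarrow> row_stochastic T \<and> column_stochastic T"
  by (auto simp: doubly_stochastic_def row_stochastic_def column_stochastic_def)

lemma matpow_add: "matpow A (m + n) = matpow A m ** matpow A n"
  by (induction m) (simp_all add: matrix_mul_assoc)

lemma row_stochastic_mult:
  assumes "row_stochastic A" "row_stochastic B"
  shows "row_stochastic (A ** B)"
proof -
  have "(\<Sum>j\<in>UNIV. (A ** B) $ i $ j) = 1" for i
  proof -
    have "(\<Sum>j\<in>UNIV. (A ** B) $ i $ j) = (\<Sum>j\<in>UNIV. \<Sum>k\<in>UNIV. A $ i $ k * B $ k $ j)"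
      by (simp add: matrix_matrix_mult_def)
    also have "\<dots> = (\<Sum>k\<in>UNIV. A $ i $ k * (\<Sum>j\<in>UNIV. B $ k $ j))"
      by (subst sum.swap) (simp add: sum_distrib_left)
    also have "\<dots> = 1" using assms by (simp add: row_stochastic_def)
    finally show ?thesis .
  qed
  moreover have "0 \<le> (A ** B) $ i $ j" for i j
    using assms unfolding row_stochastic_def matrix_matrix_mult_def by (auto intro!: sum_nonneg)
  ultimately show ?thesis by (simp add: row_stochastic_def)
qed

lemma column_stochastic_mult:
  assumes "column_stochastic A" "column_stochastic B"
  shows "column_stochastic (A ** B)"
proof -
  have "(\<Sum>i\<in>UNIV. (A ** B) $ i $ j) = 1" for j
  proof -
    have "(\<Sum>i\<in>UNIV. (A ** B) $ i $ j) = (\<Sum>i\<in>UNIV. \<Sum>k\<in>UNIV. A $ i $ k * B $ k $ j)"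
      by (simp add: matrix_matrix_mult_def)
    also have "\<dots> = (\<Sum>k\<in>UNIV. (\<Sum>i\<in>UNIV. A $ i $ k) * B $ k $ j)"
      by (subst sum.swap) (simp add: sum_distrib_right)
    also have "\<dots> = 1" using assms by (simp add: column_stochastic_def)
    finally show ?thesis .
  qed
  then show ?thesis by (simp add: column_stochastic_def)
qed

lemma row_stochastic_mat_1: "row_stochastic (mat 1)"
  by (simp add: row_stochastic_def mat_def if_distrib cong: if_cong)

lemma column_stochastic_mat_1: "column_stochastic (mat 1)"
  by (simp add: column_stochastic_def mat_def if_distrib cong: if_cong)

lemma row_stochastic_matpow: "row_stochastic A \<Longrightarrow> row_stochastic (matpow A n)"
  by (induction n) (simp_all add: row_stochastic_mat_1 row_stochastic_mult)

lemma column_stochastic_matpow: "column_stochastic A \<Longrightarrow> column_stochastic (matpow A n)"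
  by (induction n) (simp_all add: column_stochastic_mat_1 column_stochastic_mult)

lemma row_stochastic_entry_le_1:
  assumes "row_stochastic A"
  shows "A $ i $ j \<le> 1"
proof -
  have "A $ i $ j \<le> (\<Sum>l\<in>UNIV. A $ i $ l)"
    by (rule member_le_sum) (use assms in \<open>auto simp: row_stochastic_def\<close>)
  with assms show ?thesis by (simp add: row_stochastic_def)
qed

lemma weighted_mean_bounds:
  fixes w v :: "'a::finite \<Rightarrow> real"
  assumes w_nonneg: "\<And>l. 0 \<le> w l" and w_sum: "(\<Sum>l\<in>UNIV. w l) = 1" and w_ge: "\<And>l. \<delta> \<le> w l"
  shows "(\<Sum>l\<in>UNIV. w l * v l) \<le> Max (range v) - \<delta> * (Max (range v) - Min (range v))"
    and "Min (range v) + \<delta> * (Max (range v) - Min (range v)) \<le> (\<Sum>l\<in>UNIV. w l * v l)"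
proof -
  let ?M = "Max (range v)" and ?m = "Min (range v)"
  have "?m \<in> range v" "?M \<in> range v" by (rule Min_in Max_in; simp)+
  then obtain lmin lmax where lmin: "v lmin = ?m" and lmax: "v lmax = ?M" by (metis rangeE)
  have m_le_M: "?m \<le> ?M" by (simp add: Min_le_iff)
  have "w lmin * (?M - ?m) \<le> (\<Sum>l\<in>UNIV. w l * (?M - v l))"
    unfolding lmin[symmetric] by (rule member_le_sum) (auto intro!: mult_nonneg_nonneg w_nonneg)
  also have "\<dots> = ?M - (\<Sum>l\<in>UNIV. w l * v l)"
    by (simp add: right_diff_distrib sum_subtractf sum_distrib_right[symmetric] w_sum)
  finally show "(\<Sum>l\<in>UNIV. w l * v l) \<le> ?M - \<delta> * (?M - ?m)"
    using mult_right_mono[OF w_ge[of lmin], of "?M - ?m"] m_le_M by linarith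
  have "w lmax * (?M - ?m) \<le> (\<Sum>l\<in>UNIV. w l * (v l - ?m))"
    unfolding lmax[symmetric] by (rule member_le_sum) (auto intro!: mult_nonneg_nonneg w_nonneg)
  also have "\<dots> = (\<Sum>l\<in>UNIV. w l * v l) - ?m"
    by (simp add: right_diff_distrib sum_subtractf sum_distrib_right[symmetric] w_sum)
  finally show "?m + \<delta> * (?M - ?m) \<le> (\<Sum>l\<in>UNIV. w l * v l)"
    using mult_right_mono[OF w_ge[of lmax], of "?M - ?m"] m_le_M by linarith
qed

definition col_max :: "real^'c^'r::finite \<Rightarrow> 'c \<Rightarrow> real" where
  "col_max A j = Max (range (\<lambda>i. A $ i $ j))"

definition col_min :: "real^'c^'r::finite \<Rightarrow> 'c \<Rightarrow> real" where
  "col_min A j = Min (range (\<lambda>i. A $ i $ j))"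

definition col_osc :: "real^'c^'r::finite \<Rightarrow> 'c \<Rightarrow> real" where
  "col_osc A j = col_max A j - col_min A j"

lemma col_min_le_entry: "col_min A j \<le> A $ i $ j"
  unfolding col_min_def by (rule Min_le) auto

lemma entry_le_col_max: "A $ i $ j \<le> col_max A j"
  unfolding col_max_def by (rule Max_ge) auto

lemma col_osc_nonneg: "0 \<le> col_osc A j"
  using col_min_le_entry entry_le_col_max by (metis col_osc_def diff_ge_0_iff_ge order_trans)

lemma row_stochastic_mult_col_bounds:
  assumes S: "row_stochastic S" and S_ge: "\<And>i l. \<delta> \<le> S $ i $ l"
  shows "col_max (S ** A) j \<le> col_max A j - \<delta> * col_osc A j"
    and "col_min A j + \<delta> * col_osc A j \<le> col_min (S ** A) j"
proof -
  have entry: "(S ** A) $ i $ j = (\<Sum>l\<in>UNIV. S $ i $ l * A $ l $ j)" for i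
    by (simp add: matrix_matrix_mult_def)
  have "(S ** A) $ i $ j \<le> col_max A j - \<delta> * col_osc A j" for i
    using weighted_mean_bounds(1)[of "\<lambda>l. S $ i $ l" \<delta> "\<lambda>l. A $ l $ j"] S S_ge
    by (simp add: entry col_max_def col_min_def col_osc_def row_stochastic_def)
  then show "col_max (S ** A) j \<le> col_max A j - \<delta> * col_osc A j"
    by (simp add: col_max_def)
  have "col_min A j + \<delta> * col_osc A j \<le> (S ** A) $ i $ j" for i
    using weighted_mean_bounds(2)[of "\<lambda>l. S $ i $ l" \<delta> "\<lambda>l. A $ l $ j"] S S_ge
    by (simp add: entry col_max_def col_min_def col_osc_def row_stochastic_def)
  then show "col_min A j + \<delta> * col_osc A j \<le> col_min (S ** A) j"
    by (simp add: col_min_def)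
qed

lemma row_stochastic_mult_col_osc_le:
  assumes "row_stochastic S" and "\<And>i l. \<delta> \<le> S $ i $ l"
  shows "col_osc (S ** A) j \<le> (1 - 2 * \<delta>) * col_osc A j"
  using row_stochastic_mult_col_bounds[OF assms, of A j] by (simp add: col_osc_def algebra_simps)

lemma column_stochastic_entry_near_mean:
  assumes "column_stochastic A"
  shows "\<bar>A $ i $ j - 1 / real CARD('r)\<bar> \<le> col_osc (A :: real^'c^'r::finite) j"
proof -
  have sum1: "(\<Sum>i\<in>UNIV. A $ i $ j) = 1" using assms by (simp add: column_stochastic_def)
  have "real CARD('r) * col_min A j \<le> 1"
    using sum_mono[of UNIV "\<lambda>_. col_min A j" "\<lambda>i. A $ i $ j", OF col_min_le_entry] sum1 by simp
  moreover have "1 \<le> real CARD('r) * col_max A j"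
    using sum_mono[of UNIV "\<lambda>i. A $ i $ j" "\<lambda>_. col_max A j", OF entry_le_col_max] sum1 by simp
  ultimately have "col_min A j \<le> 1 / real CARD('r)" "1 / real CARD('r) \<le> col_max A j"
    by (simp_all add: field_simps)
  then show ?thesis
    using col_min_le_entry[of A j i] entry_le_col_max[of A i j] by (simp add: col_osc_def)
qed

lemma primitive_imp_positive_power:
  assumes "row_stochastic T" and "primitive T"
  shows "\<exists>K>0. \<forall>i j. 0 < matpow T K $ i $ j"
proof -
  obtain k where k: "\<And>i j. 0 < matpow T k $ i $ j"
    using assms(2) unfolding primitive_def by blast
  \<comment> \<open>\<open>k\<close> may be 0, so pass to \<open>Suc k\<close>: a row-stochastic factor keeps entries above the column minimum.\<close>
  have "0 < col_min (matpow T k) j" for j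
    using Min_in[of "range (\<lambda>i. matpow T k $ i $ j)"] k by (auto simp: col_min_def)
  moreover have "col_min (matpow T k) j \<le> matpow T (Suc k) $ i $ j" for i j
    using row_stochastic_mult_col_bounds(2)[OF assms(1), of 0 "matpow T k" j]
      col_min_le_entry[of "T ** matpow T k" j i] assms(1)
    by (simp add: row_stochastic_def)
  ultimately have "0 < matpow T (Suc k) $ i $ j" for i j
    by (meson less_le_trans)
  then show ?thesis by blast
qed

lemma col_osc_matpow_le:
  assumes T: "row_stochastic T" and "0 < K" and \<delta>: "\<And>i j. \<delta> \<le> matpow T K $ i $ j"
  shows "col_osc (matpow T \<nu>) j \<le> max 0 (1 - 2 * \<delta>) ^ (\<nu> div K)"
proof -
  define c where "c = max 0 (1 - 2 * \<delta>)"
  have T_nonneg: "\<And>i l. 0 \<le> T $ i $ l" using T by (simp add: row_stochastic_def)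
  have initial: "col_osc (matpow T r) j \<le> 1" for r
  proof (induction r)
    case 0
    have "col_max (mat 1 :: real^'a^'a) j \<le> 1" "0 \<le> col_min (mat 1 :: real^'a^'a) j"
      by (auto simp: col_max_def col_min_def mat_def)
    then show ?case by (simp add: col_osc_def)
  next
    case (Suc r)
    then show ?case
      using row_stochastic_mult_col_osc_le[OF T T_nonneg, of "matpow T r" j] by simp
  qed
  have contract: "col_osc (matpow T (K + r)) j \<le> c * col_osc (matpow T r) j" for r
  proof -
    have "col_osc (matpow T (K + r)) j \<le> (1 - 2 * \<delta>) * col_osc (matpow T r) j"
      unfolding matpow_add
      by (rule row_stochastic_mult_col_osc_le[OF row_stochastic_matpow[OF T] \<delta>])
    also have "\<dots> \<le> c * col_osc (matpow T r) j"
      by (intro mult_right_mono col_osc_nonneg) (simp add: c_def)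
    finally show ?thesis .
  qed
  have "col_osc (matpow T (q * K + r)) j \<le> c ^ q" for q r
  proof (induction q)
    case 0
    then show ?case using initial by simp
  next
    case (Suc q)
    have "col_osc (matpow T (K + (q * K + r))) j \<le> c * col_osc (matpow T (q * K + r)) j"
      by (rule contract)
    also have "\<dots> \<le> c * c ^ q"
      using Suc by (intro mult_left_mono) (simp_all add: c_def)
    finally show ?case by (simp add: add.assoc)
  qed
  from this[of "\<nu> div K" "\<nu> mod K"] show ?thesis by (simp add: c_def)
qed

lemma power_div_tendsto_zero:
  fixes c :: real
  assumes "0 \<le> c" "c < 1" "0 < K"
  shows "(\<lambda>n. c ^ (n div K)) \<longlonglongrightarrow> 0"
  using filterlim_compose[OF LIMSEQ_realpow_zero[OF assms(1,2)] filterlim_at_top_div_const_nat[OF assms(3)]]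
  by simp

theorem matpow_tendsto_avg_mat:
  fixes T :: "real^'N::finite^'N"
  assumes "doubly_stochastic T" and "primitive T"
  shows "(\<lambda>\<nu>. matpow T \<nu>) \<longlonglongrightarrow> avg_mat"
proof -
  have row: "row_stochastic T" and col: "column_stochastic T"
    using assms(1) by (simp_all add: doubly_stochastic_iff)
  obtain K where "0 < K" and K_pos: "\<And>i j. 0 < matpow T K $ i $ j"
    using primitive_imp_positive_power[OF row assms(2)] by blast
  define \<delta> where "\<delta> = Min (range (\<lambda>(i, j). matpow T K $ i $ j))"
  have \<delta>_le: "\<delta> \<le> matpow T K $ i $ j" for i j
    unfolding \<delta>_def by (rule Min_le) (auto intro: range_eqI[of _ _ "(i, j)"])
  have "\<delta> \<in> range (\<lambda>(i, j). matpow T K $ i $ j)"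
    unfolding \<delta>_def by (rule Min_in) auto
  then have "0 < \<delta>" using K_pos by auto
  define c where "c = max 0 (1 - 2 * \<delta>)"
  have decay: "(\<lambda>\<nu>. c ^ (\<nu> div K)) \<longlonglongrightarrow> 0"
    using \<open>0 < \<delta>\<close> \<open>0 < K\<close> by (intro power_div_tendsto_zero) (auto simp: c_def)
  have bound: "\<bar>matpow T \<nu> $ i $ j - 1 / real CARD('N)\<bar> \<le> c ^ (\<nu> div K)" for \<nu> i j
    using column_stochastic_entry_near_mean[OF column_stochastic_matpow[OF col], of \<nu> i j]
      col_osc_matpow_le[OF row \<open>0 < K\<close> \<delta>_le, of \<nu> j]
    by (simp add: c_def)
  have "(\<lambda>\<nu>. matpow T \<nu> $ i $ j) \<longlonglongrightarrow> 1 / real CARD('N)" for i j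
    by (rule LIM_zero_cancel, rule Lim_null_comparison[OF _ decay]) (simp add: bound)
  then show ?thesis
    by (intro vec_tendstoI) (simp add: avg_mat_def)
qed

lemma tendsto_kron_left:
  assumes "(M \<longlongrightarrow> M0) F"
  shows "((\<lambda>\<nu>. kron (M \<nu>) B) \<longlongrightarrow> kron M0 B) F"
  unfolding kron_def by (intro tendsto_intros assms)


lemma uniform_limit_sum:
  fixes f :: "'i \<Rightarrow> 'n \<Rightarrow> 'a \<Rightarrow> 'b::real_normed_vector"
  assumes "finite I" and "\<And>k. k \<in> I \<Longrightarrow> uniform_limit X (f k) (g k) F"
  shows "uniform_limit X (\<lambda>n x. \<Sum>k\<in>I. f k n x) (\<lambda>x. \<Sum>k\<in>I. g k x) F"
  using assms
proof (induction I rule: finite_induct)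
  case empty
  show ?case using uniform_limit_const[where S=X and c="\<lambda>x. 0"] by simp
next
  case (insert k I)
  then show ?case by (simp add: uniform_limit_add)
qed

lemma tendsto_imp_uniform_limit:
  assumes "(f \<longlongrightarrow> l) F"
  shows "uniform_limit X (\<lambda>n x. f n) (\<lambda>x. l) F"
  unfolding uniform_limit_iff by (simp add: tendstoD[OF assms])

lemma uniform_limit_Pair_left:
  assumes "uniform_limit X f g F"
  shows "uniform_limit X (\<lambda>n x. (h x, f n x)) (\<lambda>x. (h x, g x)) F"
  by (rule metric_uniform_limit_imp_uniform_limit[OF assms]) (simp add: dist_prod_def)

lemma uniform_limit_vec:
  fixes f :: "'n \<Rightarrow> 'a \<Rightarrow> 'b::metric_space^'i::finite"
  assumes "\<And>i. uniform_limit X (\<lambda>n x. f n x $ i) (\<lambda>x. g x $ i) F"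
  shows "uniform_limit X f g F"
proof (rule uniform_limitI)
  fix e :: real
  assume "0 < e"
  then have "\<forall>\<^sub>F n in F. \<forall>i. \<forall>x\<in>X. dist (f n x $ i) (g x $ i) < e / CARD('i)"
    by (intro eventually_all_finite uniform_limitD[OF assms]) simp
  then show "\<forall>\<^sub>F n in F. \<forall>x\<in>X. dist (f n x) (g x) < e"
  proof (rule eventually_mono, intro ballI)
    fix n x
    assume close: "\<forall>i. \<forall>x\<in>X. dist (f n x $ i) (g x $ i) < e / CARD('i)" and "x \<in> X"
    have "dist (f n x) (g x) \<le> (\<Sum>i\<in>UNIV. dist (f n x $ i) (g x $ i))"
      unfolding dist_vec_def by (rule L2_set_le_sum) simp
    also have "\<dots> < (\<Sum>i\<in>(UNIV::'i set). e / CARD('i))"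
      using close \<open>x \<in> X\<close> by (intro sum_strict_mono) simp_all
    also have "\<dots> = e" by simp
    finally show "dist (f n x) (g x) < e" .
  qed
qed


lemma sigma_nu_in_convex_hull:
  assumes "row_stochastic T" and "\<forall>k. x $ k \<in> Xs k"
  shows "sigma_nu T \<nu> x i \<in> convex hull (\<Union>j. Xs j)"
  unfolding sigma_nu_def
  by (rule convex_sum[OF _ convex_convex_hull])
    (use row_stochastic_matpow[OF assms(1), of \<nu>] assms(2) in \<open>auto simp: row_stochastic_def intro: hull_inc\<close>)

lemma sigma_inf_in_convex_hull:
  assumes "\<forall>k. x $ k \<in> Xs k"
  shows "sigma_inf x \<in> convex hull (\<Union>j. Xs j)"
proof -
  have "sigma_inf x = (\<Sum>j\<in>UNIV. (1 / real CARD('a)) *\<^sub>R x $ j)"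
    by (simp add: sigma_inf_def scaleR_sum_right)
  also have "\<dots> \<in> convex hull (\<Union>j. Xs j)"
    by (rule convex_sum[OF _ convex_convex_hull]) (use assms in \<open>auto intro: hull_inc\<close>)
  finally show ?thesis .
qed

lemma sigma_nu_uniform_limit:
  fixes T :: "real^'N::finite^'N" and S :: "(real^'n^'N) set"
  assumes "(\<lambda>\<nu>. matpow T \<nu>) \<longlonglongrightarrow> avg_mat" and "\<And>j. bounded ((\<lambda>x. x $ j) ` S)"
  shows "uniform_limit S (\<lambda>\<nu> x. sigma_nu T \<nu> x i) sigma_inf sequentially"
proof -
  have entry: "(\<lambda>\<nu>. matpow T \<nu> $ i $ j) \<longlonglongrightarrow> 1 / real CARD('N)" for j
    using tendsto_vec_nth[OF tendsto_vec_nth[OF assms(1)]] by (simp add: avg_mat_def)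
  have "uniform_limit S (\<lambda>\<nu> x. \<Sum>j\<in>UNIV. matpow T \<nu> $ i $ j *\<^sub>R x $ j)
      (\<lambda>x. \<Sum>j\<in>UNIV. (1 / real CARD('N)) *\<^sub>R x $ j) sequentially"
    by (intro uniform_limit_sum bounded_bilinear.bounded_uniform_limit[OF bounded_bilinear_scaleR]
        tendsto_imp_uniform_limit entry uniform_limit_const assms(2))
      (auto intro: bounded_subset[of "{1 / real CARD('N)}"])
  then show ?thesis
    by (simp add: sigma_nu_def sigma_inf_def[abs_def] scaleR_sum_right)
qed


lemma F_nu_uniform_limit:
  fixes Xs :: "'N::finite \<Rightarrow> (real^'n::finite) set" and T :: "real^'N^'N"
  defines "H \<equiv> convex hull (\<Union>j. Xs j)"
  assumes compact: "\<And>i. compact (Xs i)"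
    and g1_cont: "\<And>i. continuous_on (Xs i \<times> H) (\<lambda>(a, b). g1 i a b)"
    and g2_cont: "\<And>i. continuous_on (Xs i \<times> H) (\<lambda>(a, b). g2 i a b)"
    and T: "row_stochastic T" and lim: "(\<lambda>\<nu>. matpow T \<nu>) \<longlonglongrightarrow> avg_mat"
  shows "uniform_limit {x. \<forall>i. x $ i \<in> Xs i} (\<lambda>\<nu> x. F_nu g1 g2 T \<nu> x) (F_inf g1 g2) sequentially"
proof (rule uniform_limit_vec)
  fix i
  let ?X = "{x. \<forall>i. x $ i \<in> Xs i}"
  have "compact H"
    unfolding H_def by (intro compact_convex_hull compact_UN compact) auto
  then have compact_XH: "compact (Xs i \<times> H)"
    by (intro compact_Times compact)
  have "bounded ((\<lambda>x. x $ j) ` ?X)" for j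
    by (rule bounded_subset[OF compact_imp_bounded[OF compact[of j]]]) auto
  then have pair_lim: "uniform_limit ?X (\<lambda>\<nu> x. (x $ i, sigma_nu T \<nu> x i)) (\<lambda>x. (x $ i, sigma_inf x)) sequentially"
    by (intro uniform_limit_Pair_left sigma_nu_uniform_limit lim)
  have in_XH: "\<forall>\<^sub>F \<nu> in sequentially. \<forall>x\<in>?X. (x $ i, sigma_nu T \<nu> x i) \<in> Xs i \<times> H"
    by (intro always_eventually) (auto simp: H_def intro: sigma_nu_in_convex_hull[OF T])
  have compose: "uniform_limit ?X (\<lambda>\<nu> x. g i (x $ i) (sigma_nu T \<nu> x i)) (\<lambda>x. g i (x $ i) (sigma_inf x)) sequentially"
    if "continuous_on (Xs i \<times> H) (\<lambda>(a, b). g i a b)" for g :: "'N \<Rightarrow> real^'n \<Rightarrow> real^'n \<Rightarrow> real^'n"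
    using uniform_limit_compose_uniformly_continuous_on[OF pair_lim
        compact_uniformly_continuous[OF that compact_XH] in_XH compact_imp_closed[OF compact_XH]]
    by simp
  have "bounded ((\<lambda>x. g2 i (x $ i) (sigma_inf x)) ` ?X)"
    by (rule bounded_subset[OF compact_imp_bounded[OF compact_continuous_image[OF g2_cont compact_XH]]])
      (auto simp: H_def sigma_inf_in_convex_hull)
  moreover have "(\<lambda>\<nu>. matpow T \<nu> $ i $ i) \<longlonglongrightarrow> 1 / real CARD('N)"
    using tendsto_vec_nth[OF tendsto_vec_nth[OF lim]] by (simp add: avg_mat_def)
  ultimately show "uniform_limit ?X (\<lambda>\<nu> x. F_nu g1 g2 T \<nu> x $ i) (\<lambda>x. F_inf g1 g2 x $ i) sequentially"
    unfolding F_nu_def F_inf_def vec_lambda_beta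
    by (intro uniform_limit_add compose g1_cont g2_cont tendsto_imp_uniform_limit
        bounded_bilinear.bounded_uniform_limit[OF bounded_bilinear_scaleR])
      (auto intro: bounded_subset[of "{1 / real CARD('N)}"])
qed


lemma continuous_on_compact_bounded_family:
  fixes g :: "'i::finite \<Rightarrow> 'a::metric_space \<Rightarrow> 'b::metric_space \<Rightarrow> 'c::real_normed_vector"
  assumes "\<And>i. compact (A i)" and "compact C" and "\<And>i. continuous_on (A i \<times> C) (\<lambda>(a, b). g i a b)"
  obtains B where "\<And>i a b. a \<in> A i \<Longrightarrow> b \<in> C \<Longrightarrow> norm (g i a b) \<le> B"
proof -
  have "compact ((\<lambda>(a, b). g i a b) ` (A i \<times> C))" for i
    by (rule compact_continuous_image[OF assms(3) compact_Times[OF assms(1,2)]])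
  then have "bounded (\<Union>i. (\<lambda>(a, b). g i a b) ` (A i \<times> C))"
    by (intro compact_imp_bounded compact_UN) auto
  then obtain B where "\<forall>y\<in>(\<Union>i. (\<lambda>(a, b). g i a b) ` (A i \<times> C)). norm y \<le> B"
    unfolding bounded_iff by blast
  then show ?thesis
    by (intro that) auto
qed

lemma F_nu_bounded:
  fixes Xs :: "'N::finite \<Rightarrow> (real^'n::finite) set" and T :: "real^'N^'N"
  defines "H \<equiv> convex hull (\<Union>j. Xs j)"
  assumes compact: "\<And>i. compact (Xs i)"
    and g1_cont: "\<And>i. continuous_on (Xs i \<times> H) (\<lambda>(a, b). g1 i a b)"
    and g2_cont: "\<And>i. continuous_on (Xs i \<times> H) (\<lambda>(a, b). g2 i a b)"
    and T: "row_stochastic T"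
  shows "\<exists>B. \<forall>\<nu> x. (\<forall>i. x $ i \<in> Xs i) \<longrightarrow> norm (F_nu g1 g2 T \<nu> x) \<le> B"
proof -
  have "compact H"
    unfolding H_def by (intro compact_convex_hull compact_UN compact) auto
  obtain B1 where B1: "\<And>i a b. a \<in> Xs i \<Longrightarrow> b \<in> H \<Longrightarrow> norm (g1 i a b) \<le> B1"
    using continuous_on_compact_bounded_family[where A=Xs, OF compact \<open>compact H\<close> g1_cont] by blast
  obtain B2 where B2: "\<And>i a b. a \<in> Xs i \<Longrightarrow> b \<in> H \<Longrightarrow> norm (g2 i a b) \<le> B2"
    using continuous_on_compact_bounded_family[where A=Xs, OF compact \<open>compact H\<close> g2_cont] by blast
  have "norm (F_nu g1 g2 T \<nu> x) \<le> CARD('N) * (B1 + B2)" if x: "\<forall>i. x $ i \<in> Xs i" for \<nu> x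
  proof -
    have "norm (F_nu g1 g2 T \<nu> x $ i) \<le> B1 + B2" for i
    proof -
      let ?s = "sigma_nu T \<nu> x i" and ?t = "matpow T \<nu> $ i $ i"
      have x_i: "x $ i \<in> Xs i" using x ..
      have s: "?s \<in> H" unfolding H_def by (rule sigma_nu_in_convex_hull[OF T x])
      have "0 \<le> ?t" "?t \<le> 1"
        using row_stochastic_matpow[OF T, of \<nu>] row_stochastic_entry_le_1[OF row_stochastic_matpow[OF T]]
        by (auto simp: row_stochastic_def)
      have "norm (F_nu g1 g2 T \<nu> x $ i) \<le> norm (g1 i (x $ i) ?s) + \<bar>?t\<bar> * norm (g2 i (x $ i) ?s)"
        using norm_triangle_ineq[of "g1 i (x $ i) ?s" "?t *\<^sub>R g2 i (x $ i) ?s"] by (simp add: F_nu_def)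
      also have "\<dots> \<le> B1 + 1 * B2"
        using B1[OF x_i s] B2[OF x_i s] \<open>0 \<le> ?t\<close> \<open>?t \<le> 1\<close> by (intro add_mono mult_mono) auto
      finally show ?thesis by simp
    qed
    then have "(\<Sum>i\<in>UNIV. norm (F_nu g1 g2 T \<nu> x $ i)) \<le> CARD('N) * (B1 + B2)"
      using sum_mono[of UNIV "\<lambda>i. norm (F_nu g1 g2 T \<nu> x $ i)" "\<lambda>_. B1 + B2"] by simp
    moreover have "norm (F_nu g1 g2 T \<nu> x) \<le> (\<Sum>i\<in>UNIV. norm (F_nu g1 g2 T \<nu> x $ i))"
      unfolding norm_vec_def by (rule L2_set_le_sum) simp
    ultimately show ?thesis by linarith
  qed
  then show ?thesis by blast
qed


theorem lemma1:
  fixes Xs :: "'N::finite \<Rightarrow> (real^'n::finite) set"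
    and J :: "'N \<Rightarrow> real^'n \<Rightarrow> real^'n \<Rightarrow> real"
    and g1 g2 :: "'N \<Rightarrow> real^'n \<Rightarrow> real^'n \<Rightarrow> real^'n"
    and Ahat :: "real^'n^'m::finite"
    and T :: "real^'N^'N"
  assumes Xs_convex: "\<And>i. convex (Xs i)"
    and Xs_compact: "\<And>i. compact (Xs i)"
    and Xs_interior: "\<And>i. interior (Xs i) \<noteq> {}"
    and J_deriv: "\<And>i z1 z2. z1 \<in> Xs i \<Longrightarrow> z2 \<in> convex hull (\<Union>j. Xs j) \<Longrightarrow>
        ((\<lambda>(a, b). J i a b) has_derivative (\<lambda>(h1, h2). g1 i z1 z2 \<bullet> h1 + g2 i z1 z2 \<bullet> h2))
          (at (z1, z2) within Xs i \<times> (convex hull (\<Union>j. Xs j)))"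
    and g1_cont: "\<And>i. continuous_on (Xs i \<times> (convex hull (\<Union>j. Xs j))) (\<lambda>(a, b). g1 i a b)"
    and g2_cont: "\<And>i. continuous_on (Xs i \<times> (convex hull (\<Union>j. Xs j))) (\<lambda>(a, b). g2 i a b)"
    and J_convex: "\<And>i x. (\<forall>k. x $ k \<in> Xs k) \<Longrightarrow>
        convex_on (Xs i) (\<lambda>y. J i y (sigma_inf (\<chi> k. if k = i then y else x $ k)))"
    and T_range: "\<And>i j. T $ i $ j \<in> {0..1}"
    and T_primitive: "primitive T"
    and T_ds: "doubly_stochastic T"
  shows "((\<lambda>\<nu>. matpow T \<nu>) \<longlonglongrightarrow> avg_mat)
    \<and> ((\<lambda>\<nu>. A_nu T Ahat \<nu>) \<longlonglongrightarrow> A_inf Ahat)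
    \<and> uniform_limit {x. \<forall>i. x $ i \<in> Xs i} (\<lambda>\<nu> x. F_nu g1 g2 T \<nu> x) (F_inf g1 g2) sequentially
    \<and> (\<exists>B. \<forall>\<nu> x. (\<forall>i. x $ i \<in> Xs i) \<longrightarrow> norm (F_nu g1 g2 T \<nu> x) \<le> B)"
proof (intro conjI)
  have T_row: "row_stochastic T"
    using T_ds by (simp add: doubly_stochastic_iff)
  show lim: "(\<lambda>\<nu>. matpow T \<nu>) \<longlonglongrightarrow> avg_mat"
    by (rule matpow_tendsto_avg_mat[OF T_ds T_primitive])
  show "(\<lambda>\<nu>. A_nu T Ahat \<nu>) \<longlonglongrightarrow> A_inf Ahat"
    unfolding A_nu_def A_inf_def by (rule tendsto_kron_left[OF lim])
  show "uniform_limit {x. \<forall>i. x $ i \<in> Xs i} (\<lambda>\<nu> x. F_nu g1 g2 T \<nu> x) (F_inf g1 g2) sequentially"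
    by (rule F_nu_uniform_limit[OF Xs_compact g1_cont g2_cont T_row lim])
  show "\<exists>B. \<forall>\<nu> x. (\<forall>i. x $ i \<in> Xs i) \<longrightarrow> norm (F_nu g1 g2 T \<nu> x) \<le> B"
    by (rule F_nu_bounded[OF Xs_compact g1_cont g2_cont T_row])
qed

end
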